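(* Let $K$ be a positive integer. Consider a nonempty configuration and an integer shift $G$ with $2^K\le A(G)<2^b$. In one outer iteration of the inter-level sampler, let the number of scanned levels be the number of level indices $\lambda,\lambda-1,\dots$ visited by the scan up to and including the level at which the scan stops (returns, or enters the refinement loop). Its expectation is at most $2b+\frac{N(N+1)}{2^{K+1}}$.
   Context: Fix an integer $b\ge 2$. There is a set $\mathcal L$ of $N$ levels, which are consecutive integers. Each level $\ell$ holds a finite (possibly empty) multiset of normalized significands, each an integer in $[2^{b-1},2^b)$. Let $z$ be the total number of stored significands over all levels; assume $z<2^b$. For each level, $SS_\ell$ is the sum of its significands (so $SS_\ell=0$ iff the level is empty); set $SS_\ell=0$ for integers $\ell\notin\mathcal L$. The level weight is $W_\ell=SS_\ell2^\ell$. For an integer global shift $G$, $A_\ell(G)=\lfloor W_\ell2^G\rfloor+1$ if $SS_\ell>0$ and $A_\ell(G)=0$ if $SS_\ell=0$; $A(G)=\sum_\ell A_\ell(G)$. The configuration is nonempty if $z\ge1$; then $\lambda$ denotes the largest nonempty level. Inter-level sampler (Algorithm 1), with shift $G$ and $A=A(G)$: it performs independent outer iterations. In an outer iteration, draw $x$ uniformly from $\{1,\dots,A\}$ and scan the level indices in decreasing order starting from $\lambda$ (empty levels included, with $A_\ell(G)=0$). At the current level $\ell$: if $x<A_\ell(G)$, return $\ell$; if $x=A_\ell(G)$, run the refinement loop for $m=1,2,\dots$: draw $r$ uniformly from $\{0,\dots,2^b-1\}$ independently, let $t=\lfloor SS_\ell 2^{\ell+G+mb}\rfloor \bmod 2^b$;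 if $r<t$ return $\ell$; else if $r>t$ or $\ell+G+mb\ge 0$, abandon this outer iteration and start a new one; otherwise continue with $m+1$. If $x>A_\ell(G)$, set $x\leftarrow x-A_\ell(G)$ and move to the next lower level. *)

theory Defs
  imports "HOL-Probability.Probability"
begin

text \<open>Levels are the consecutive integers lo, lo+1, ..., lo+N-1.
  A configuration assigns to each integer level a multiset of significands
  (empty outside the level set).\<close>

definition levels :: "int \<Rightarrow> nat \<Rightarrow> int set" where
  "levels lo N = {lo..<lo + int N}"

definition valid_config :: "nat \<Rightarrow> int \<Rightarrow> nat \<Rightarrow> (int \<Rightarrow> nat multiset) \<Rightarrow> bool" where
  "valid_config b lo N M \<longleftrightarrow>
     (\<forall>l. l \<notin> levels lo N \<longrightarrow> M l = {#}) \<and>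
     (\<forall>l s. s \<in># M l \<longrightarrow> 2 ^ (b - 1) \<le> s \<and> s < 2 ^ b) \<and>
     (\<Sum>l\<in>levels lo N. size (M l)) < 2 ^ b"

definition SS :: "(int \<Rightarrow> nat multiset) \<Rightarrow> int \<Rightarrow> nat" where
  "SS M l = sum_mset (M l)"

definition W :: "(int \<Rightarrow> nat multiset) \<Rightarrow> int \<Rightarrow> real" where
  "W M l = real (SS M l) * (2::real) powi l"

definition Alev :: "(int \<Rightarrow> nat multiset) \<Rightarrow> int \<Rightarrow> int \<Rightarrow> int" where
  "Alev M G l = (if SS M l > 0 then \<lfloor>W M l * (2::real) powi G\<rfloor> + 1 else 0)"

definition Atot :: "int \<Rightarrow> nat \<Rightarrow> (int \<Rightarrow> nat multiset) \<Rightarrow> int \<Rightarrow> int" where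
  "Atot lo N M G = (\<Sum>l\<in>levels lo N. Alev M G l)"

definition topLevel :: "int \<Rightarrow> nat \<Rightarrow> (int \<Rightarrow> nat multiset) \<Rightarrow> int" where
  "topLevel lo N M = Max {l \<in> levels lo N. M l \<noteq> {#}}"

text \<open>Number of levels lambda, lambda-1, ... visited by the scan for the draw x,
  up to and including the level where it stops (x < A_l: return; x = A_l: refinement).\<close>

definition scanned :: "int \<Rightarrow> nat \<Rightarrow> (int \<Rightarrow> nat multiset) \<Rightarrow> int \<Rightarrow> nat \<Rightarrow> nat" where
  "scanned lo N M G x =
     (LEAST n::nat. int x \<le> (\<Sum>i<n. Alev M G (topLevel lo N M - int i)))"

end

theory Submission
  imports Defs
begin

(*
  Write a_i for the A-value of the level lambda - i.  The scan stops at its (i+1)-st level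
  for exactly a_i of the A equally likely draws, so the expectation is SUM (i+1) a_i / A.
  Since a_i <= w_i + 1 with w_i = W_(lambda-i) 2^G, the "+1" parts contribute at most
  N(N+1)/2.  The w_i are proportional to SS_(lambda-i) / 2^i, where SS_lambda >= 2^(b-1)
  and all SS together are below 2^(2b).  As (i+1-2b) / 2^i <= 2^(-2b), the terms with i >= 1
  of SUM (i+1-2b) w_i cannot outweigh the negative term i = 0, whence
  SUM (i+1) w_i <= 2b SUM w_i <= 2b A.  Dividing by A >= 2^K gives the bound.
*)

lemma sum_Least_prefix_sum_ge:
  fixes c :: "nat \<Rightarrow> nat"
  shows "(\<Sum>x\<in>{1..(\<Sum>i<n. c i)}. (LEAST m. x \<le> (\<Sum>i<m. c i))) = (\<Sum>i<n. (i + 1) * c i)"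
proof (induction n)
  case 0
  then show ?case by simp
next
  case (Suc n)
  let ?S = "\<lambda>m. \<Sum>i<m. c i"
  have Least_eq: "(LEAST m. x \<le> ?S m) = Suc n" if "?S n < x" "x \<le> ?S (Suc n)" for x
  proof (rule Least_equality)
    show "Suc n \<le> m" if "x \<le> ?S m" for m
    proof (rule ccontr)
      assume "\<not> Suc n \<le> m"
      then have "?S m \<le> ?S n" by (intro sum_mono2) auto
      with \<open>?S n < x\<close> \<open>x \<le> ?S m\<close> show False by simp
    qed
  qed fact
  have "{1..?S (Suc n)} = {1..?S n} \<union> {?S n + 1..?S n + c n}" by auto
  then have "(\<Sum>x\<in>{1..?S (Suc n)}. (LEAST m. x \<le> ?S m))
      = (\<Sum>x\<in>{1..?S n}. (LEAST m. x \<le> ?S m)) + (\<Sum>x\<in>{?S n + 1..?S n + c n}. (LEAST m. x \<le> ?S m))"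
    by (simp add: sum.union_disjoint)
  also have "(\<Sum>x\<in>{?S n + 1..?S n + c n}. (LEAST m. x \<le> ?S m)) = c n * Suc n"
    using Least_eq by simp
  finally show ?case using Suc by simp
qed

lemma index_excess_div_pow2_le:
  "(real (i + 1) - 2 * real b) / 2 ^ i \<le> 1 / 2 ^ (2 * b)"
proof (cases "i + 1 \<le> 2 * b")
  case True
  then have "(real (i + 1) - 2 * real b) / 2 ^ i \<le> 0" by (simp add: divide_nonpos_pos)
  also have "\<dots> \<le> 1 / 2 ^ (2 * b)" by simp
  finally show ?thesis .
next
  case False
  then obtain j where i: "i = 2 * b + j" using le_Suc_ex[of "2 * b" i] by auto
  have "j + 1 \<le> (2::nat) ^ j" using less_exp[of j] by linarith
  then have "real (j + 1) \<le> 2 ^ j" by (metis of_nat_le_iff of_nat_numeral of_nat_power)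
  then have "real (i + 1) - 2 * real b \<le> 2 ^ j" using i by simp
  then have "(real (i + 1) - 2 * real b) / 2 ^ i \<le> 2 ^ j / 2 ^ i" by (simp add: divide_right_mono)
  also have "\<dots> = 1 / 2 ^ (2 * b)" using i by (simp add: power_add)
  finally show ?thesis .
qed

lemma sum_index_weighted_le:
  fixes s :: "nat \<Rightarrow> real"
  assumes "b \<ge> 1" "n \<ge> 1" "\<And>i. s i \<ge> 0" "2 ^ (b - 1) \<le> s 0" "(\<Sum>i<n. s i) < 2 ^ (2 * b)"
  shows "(\<Sum>i<n. real (i + 1) * (s i / 2 ^ i)) \<le> 2 * real b * (\<Sum>i<n. s i / 2 ^ i)"
proof -
  \<comment> \<open>The claim is \<open>\<Sum>d \<le> 0\<close>: \<open>d 0 \<le> -1\<close>, while the other terms sum to less than 1.\<close>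
  define d where "d i = (real (i + 1) - 2 * b) * (s i / 2 ^ i)" for i
  obtain m where n: "n = Suc m" using assms(2) by (cases n) auto
  have "(\<Sum>i<m. d (Suc i)) \<le> (\<Sum>i<m. s (Suc i) / 2 ^ (2 * b))"
  proof (rule sum_mono)
    fix i
    show "d (Suc i) \<le> s (Suc i) / 2 ^ (2 * b)"
      using mult_right_mono[OF index_excess_div_pow2_le[of "Suc i" b] assms(3)] by (simp add: d_def)
  qed
  also have "\<dots> \<le> (\<Sum>i<n. s i / 2 ^ (2 * b))"
    unfolding n sum.lessThan_Suc_shift using assms(3)[of 0] by simp
  also have "\<dots> = (\<Sum>i<n. s i) / 2 ^ (2 * b)" by (simp add: sum_divide_distrib)
  also have "\<dots> < 1" using assms(5) by simp
  finally have tail: "(\<Sum>i<m. d (Suc i)) < 1" .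
  have "(2 * real b - 1) * 1 \<le> (2 * real b - 1) * s 0"
    using assms(1) order_trans[OF one_le_power assms(4)] by (intro mult_left_mono) auto
  then have head: "d 0 \<le> -1" using assms(1) by (simp add: d_def algebra_simps)
  have "(\<Sum>i<n. d i) \<le> 0"
    using head tail unfolding n sum.lessThan_Suc_shift by simp
  then show ?thesis
    by (simp add: d_def algebra_simps sum_subtractf sum_distrib_left)
qed

lemma member_le_sum_mset:
  fixes X :: "'a::canonically_ordered_monoid_add multiset"
  assumes "x \<in># X"
  shows "x \<le> sum_mset X"
proof -
  obtain Y where "X = add_mset x Y" using multi_member_split[OF assms] ..
  then have "sum_mset X = x + sum_mset Y" by simp
  then show ?thesis using le_iff_add by blast
qed

lemma finite_levels: "finite (levels lo N)"
  by (simp add: levels_def)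

lemma valid_config_empty_outside:
  "valid_config b lo N M \<Longrightarrow> l \<notin> levels lo N \<Longrightarrow> M l = {#}"
  by (simp add: valid_config_def)

lemma valid_config_SS_ge:
  assumes "valid_config b lo N M" "M l \<noteq> {#}"
  shows "2 ^ (b - 1) \<le> SS M l"
proof -
  obtain s where s: "s \<in># M l" using assms(2) by (meson multiset_nonemptyE)
  then have "2 ^ (b - 1) \<le> s" using assms(1) by (simp add: valid_config_def)
  also have "s \<le> SS M l" using s unfolding SS_def by (rule member_le_sum_mset)
  finally show ?thesis .
qed

lemma valid_config_SS_le:
  assumes "valid_config b lo N M"
  shows "SS M l \<le> size (M l) * 2 ^ b"
proof -
  have "sum_mset (image_mset id (M l)) \<le> sum_mset (image_mset (\<lambda>_. 2 ^ b) (M l))"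
    using assms by (intro sum_mset_mono) (auto simp: valid_config_def less_imp_le)
  then show ?thesis by (simp add: SS_def)
qed

lemma Alev_empty: "M l = {#} \<Longrightarrow> Alev M G l = 0"
  by (simp add: Alev_def SS_def)

lemma Alev_nonneg: "0 \<le> Alev M G l"
  by (simp add: Alev_def W_def)

lemma Alev_ge: "W M l * 2 powi G \<le> Alev M G l"
  by (simp add: Alev_def W_def real_of_int_floor_add_one_ge)

lemma Alev_le: "Alev M G l \<le> W M l * 2 powi G + 1"
  by (simp add: Alev_def W_def)

lemma
  assumes "valid_config b lo N M" "\<exists>l. M l \<noteq> {#}"
  shows topLevel_in_levels: "topLevel lo N M \<in> levels lo N"
    and topLevel_nonempty: "M (topLevel lo N M) \<noteq> {#}"
proof -
  have "{l \<in> levels lo N. M l \<noteq> {#}} \<noteq> {}"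
    using assms valid_config_empty_outside by blast
  then have "topLevel lo N M \<in> {l \<in> levels lo N. M l \<noteq> {#}}"
    unfolding topLevel_def using finite_levels by (intro Max_in) auto
  then show "topLevel lo N M \<in> levels lo N" "M (topLevel lo N M) \<noteq> {#}" by auto
qed

lemma empty_above_topLevel:
  assumes "valid_config b lo N M" "topLevel lo N M < l"
  shows "M l = {#}"
proof (rule ccontr)
  assume "M l \<noteq> {#}"
  moreover from this have "l \<in> levels lo N" using assms(1) valid_config_empty_outside by blast
  ultimately have "l \<le> topLevel lo N M"
    using finite_levels unfolding topLevel_def by (intro Max_ge) auto
  with assms(2) show False by simp
qed

lemma sum_levels_from_top:
  fixes F :: "int \<Rightarrow> 'a::comm_monoid_add"
  assumes "t \<in> levels lo N" "\<And>l. t < l \<Longrightarrow> F l = 0" "\<And>l. l < lo \<Longrightarrow> F l = 0"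
  shows "(\<Sum>l\<in>levels lo N. F l) = (\<Sum>i<N. F (t - int i))"
proof -
  have "(\<Sum>i<N. F (t - int i)) = (\<Sum>l\<in>(\<lambda>i. t - int i) ` {..<N}. F l)"
    by (subst sum.reindex) (auto simp: inj_on_def)
  also have "(\<lambda>i. t - int i) ` {..<N} = {t - int N + 1..t}"
  proof -
    have "l \<in> (\<lambda>i. t - int i) ` {..<N}" if "l \<in> {t - int N + 1..t}" for l
      using that by (intro image_eqI[where x = "nat (t - l)"]) auto
    then show ?thesis by auto
  qed
  also have "(\<Sum>l\<in>{t - int N + 1..t}. F l) = (\<Sum>l\<in>{lo..t}. F l)"
    using assms by (intro sum.mono_neutral_right) (auto simp: levels_def)
  also have "\<dots> = (\<Sum>l\<in>levels lo N. F l)"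
    using assms by (intro sum.mono_neutral_left) (auto simp: levels_def)
  finally show ?thesis by simp
qed

lemma sum_levels_from_topLevel:
  fixes F :: "int \<Rightarrow> 'a::comm_monoid_add"
  assumes "valid_config b lo N M" "\<exists>l. M l \<noteq> {#}" "\<And>l. M l = {#} \<Longrightarrow> F l = 0"
  shows "(\<Sum>l\<in>levels lo N. F l) = (\<Sum>i<N. F (topLevel lo N M - int i))"
proof (rule sum_levels_from_top)
  show "topLevel lo N M \<in> levels lo N" using assms(1,2) by (rule topLevel_in_levels)
  show "F l = 0" if "topLevel lo N M < l" for l
    using assms(1,3) that by (simp add: empty_above_topLevel)
  show "F l = 0" if "l < lo" for l
    using assms(1,3) that by (simp add: valid_config_empty_outside levels_def)
qed

lemma Atot_from_top:
  assumes "valid_config b lo N M" "\<exists>l. M l \<noteq> {#}"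
  shows "Atot lo N M G = (\<Sum>i<N. Alev M G (topLevel lo N M - int i))"
  unfolding Atot_def using assms Alev_empty by (rule sum_levels_from_topLevel)

lemma SS_sum_from_top_less:
  assumes "valid_config b lo N M" "\<exists>l. M l \<noteq> {#}"
  shows "(\<Sum>i<N. SS M (topLevel lo N M - int i)) < 2 ^ (2 * b)"
proof -
  have "(\<Sum>i<N. SS M (topLevel lo N M - int i)) = (\<Sum>l\<in>levels lo N. SS M l)"
    using assms by (intro sum_levels_from_topLevel[symmetric]) (simp_all add: SS_def)
  also have "\<dots> \<le> (\<Sum>l\<in>levels lo N. size (M l)) * 2 ^ b"
    unfolding sum_distrib_right using assms(1) by (intro sum_mono valid_config_SS_le)
  also have "\<dots> < 2 ^ b * 2 ^ b"
    using assms(1) by (simp add: valid_config_def)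
  finally show ?thesis by (simp add: power_add[symmetric] mult_2)
qed

lemma expectation_scanned:
  assumes "valid_config b lo N M" "\<exists>l. M l \<noteq> {#}" "0 < Atot lo N M G"
  shows "measure_pmf.expectation (pmf_of_set {1..nat (Atot lo N M G)})
           (\<lambda>x. real (scanned lo N M G x))
         = (\<Sum>i<N. real (i + 1) * Alev M G (topLevel lo N M - int i)) / Atot lo N M G"
proof -
  define c where "c i = nat (Alev M G (topLevel lo N M - int i))" for i
  have Alev_c: "Alev M G (topLevel lo N M - int i) = int (c i)" for i
    unfolding c_def using Alev_nonneg by simp
  have A: "Atot lo N M G = int (\<Sum>i<N. c i)"
    using Atot_from_top[OF assms(1,2)] by (simp add: Alev_c)
  have scanned: "scanned lo N M G x = (LEAST m. x \<le> (\<Sum>i<m. c i))" for x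
    unfolding scanned_def Alev_c by (simp flip: of_nat_sum)
  have "(\<Sum>x\<in>{1..nat (Atot lo N M G)}. scanned lo N M G x) = (\<Sum>i<N. (i + 1) * c i)"
    unfolding scanned A nat_int by (rule sum_Least_prefix_sum_ge)
  then have "(\<Sum>x\<in>{1..nat (Atot lo N M G)}. real (scanned lo N M G x))
      = (\<Sum>i<N. real (i + 1) * real (c i))"
    by (simp only: of_nat_sum [symmetric] of_nat_mult [symmetric])
  moreover have "card {1..nat (Atot lo N M G)} \<noteq> 0" using assms(3) by simp
  ultimately show ?thesis
    by (simp add: integral_pmf_of_set A Alev_c)
qed

lemma weighted_W_sum_le:
  fixes G :: int
  assumes "b \<ge> 1" "valid_config b lo N M" "\<exists>l. M l \<noteq> {#}"
  defines "w \<equiv> \<lambda>i. W M (topLevel lo N M - int i) * 2 powi G"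
  shows "(\<Sum>i<N. real (i + 1) * w i) \<le> 2 * real b * (\<Sum>i<N. w i)"
proof -
  define t where "t = topLevel lo N M"
  define s where "s i = real (SS M (t - int i))" for i
  define C :: real where "C = 2 powi (t + G)"
  have w: "w i = C * (s i / 2 ^ i)" for i
  proof -
    have "w i = s i * (2 powi (t - int i) * 2 powi G)"
      by (simp add: w_def W_def s_def t_def mult.assoc)
    also have "(2::real) powi (t - int i) * 2 powi G = C / 2 ^ i"
      by (simp add: C_def power_int_add[symmetric] power_int_diff algebra_simps)
    finally show ?thesis by simp
  qed
  have "N \<ge> 1" using topLevel_in_levels[OF assms(2,3)] by (simp add: levels_def)
  moreover have "2 ^ (b - 1) \<le> s 0"
    using valid_config_SS_ge[OF assms(2) topLevel_nonempty[OF assms(2,3)]]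
    by (simp add: s_def t_def)
  moreover have "(\<Sum>i<N. s i) < 2 ^ (2 * b)"
    using SS_sum_from_top_less[OF assms(2,3)] unfolding s_def t_def
    by (metis of_nat_less_numeral_power_cancel_iff of_nat_sum)
  ultimately have "(\<Sum>i<N. real (i + 1) * (s i / 2 ^ i)) \<le> 2 * real b * (\<Sum>i<N. s i / 2 ^ i)"
    using assms(1) by (intro sum_index_weighted_le) (auto simp: s_def)
  then have "C * (\<Sum>i<N. real (i + 1) * (s i / 2 ^ i)) \<le> C * (2 * real b * (\<Sum>i<N. s i / 2 ^ i))"
    by (simp add: C_def)
  then show ?thesis
    by (simp add: w sum_distrib_left algebra_simps)
qed

lemma weighted_Alev_sum_le:
  assumes "b \<ge> 1" "valid_config b lo N M" "\<exists>l. M l \<noteq> {#}"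
  shows "(\<Sum>i<N. real (i + 1) * Alev M G (topLevel lo N M - int i))
         \<le> 2 * real b * Atot lo N M G + real N * (real N + 1) / 2"
proof -
  let ?a = "\<lambda>i. Alev M G (topLevel lo N M - int i)"
  let ?w = "\<lambda>i. W M (topLevel lo N M - int i) * 2 powi G"
  have "(\<Sum>i<N. real (i + 1) * ?a i) \<le> (\<Sum>i<N. real (i + 1) * ?w i + real (i + 1))"
  proof (rule sum_mono)
    fix i
    show "real (i + 1) * ?a i \<le> real (i + 1) * ?w i + real (i + 1)"
      using mult_left_mono[OF Alev_le, of "real (i + 1)"] by (simp add: distrib_left)
  qed
  also have "\<dots> = (\<Sum>i<N. real (i + 1) * ?w i) + real N * (real N + 1) / 2"
    by (simp add: sum.distrib) (induction N; simp add: field_simps)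
  finally have "(\<Sum>i<N. real (i + 1) * ?a i)
      \<le> (\<Sum>i<N. real (i + 1) * ?w i) + real N * (real N + 1) / 2" .
  moreover have "(\<Sum>i<N. real (i + 1) * ?w i) \<le> 2 * real b * (\<Sum>i<N. ?w i)"
    using assms by (rule weighted_W_sum_le)
  moreover have "(\<Sum>i<N. ?w i) \<le> Atot lo N M G"
    unfolding Atot_from_top[OF assms(2,3)] of_int_sum by (intro sum_mono Alev_ge)
  then have "2 * real b * (\<Sum>i<N. ?w i) \<le> 2 * real b * Atot lo N M G"
    by (simp add: mult_left_mono)
  ultimately show ?thesis by linarith
qed

theorem mainTheorem13:
  fixes b K N :: nat and lo G :: int and M :: "int \<Rightarrow> nat multiset"
  assumes "b \<ge> 2"
    and "valid_config b lo N M"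
    and "\<exists>l. M l \<noteq> {#}"
    and "K \<ge> 1"
    and "2 ^ K \<le> Atot lo N M G"
    and "Atot lo N M G < 2 ^ b"
  shows "measure_pmf.expectation (pmf_of_set {1..nat (Atot lo N M G)})
           (\<lambda>x. real (scanned lo N M G x))
         \<le> 2 * real b + real N * (real N + 1) / 2 ^ (K + 1)"
proof -
  let ?A = "real_of_int (Atot lo N M G)"
  have A_ge: "(2::real) ^ K \<le> ?A"
    using assms(5) by (metis of_int_le_iff of_int_numeral of_int_power)
  moreover have "(0::real) < 2 ^ K" by simp
  ultimately have A_pos: "0 < ?A" by linarith
  have "measure_pmf.expectation (pmf_of_set {1..nat (Atot lo N M G)})
          (\<lambda>x. real (scanned lo N M G x))
        = (\<Sum>i<N. real (i + 1) * Alev M G (topLevel lo N M - int i)) / ?A"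
    using A_pos assms(2,3) by (intro expectation_scanned) simp_all
  also have "\<dots> \<le> (2 * real b * ?A + real N * (real N + 1) / 2) / ?A"
    using assms(1-3) A_pos by (intro divide_right_mono weighted_Alev_sum_le) simp_all
  also have "\<dots> = 2 * real b + real N * (real N + 1) / (2 * ?A)"
    using A_pos by (simp add: field_simps)
  also have "\<dots> \<le> 2 * real b + real N * (real N + 1) / 2 ^ (K + 1)"
    using A_ge A_pos by (simp add: divide_left_mono)
  finally show ?thesis .
qed

end
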